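(* Let $D$ be a strong symmetric digraph of order $n$ and $k$ an integer with $2\le k\le n$. Then $\lambda_k(D)\ge 2$ if and only if $D$ has no bridge.
   Context: A digraph $D$ is symmetric if for every arc $xy$, $yx$ is also an arc. A 2-cycle $xyx$ of a strong digraph $D$ is a bridge if $D-\{xy,yx\}$ is disconnected (i.e., its underlying graph is disconnected). For $S\subseteq V(D)$, $\lambda_S(D)$ is the maximum number of pairwise arc-disjoint strong subgraphs of $D$ containing $S$, and $\lambda_k(D)=\min\{\lambda_S(D): S\subseteq V(D), |S|=k\}$. *)

theory Defs
  imports Main
begin

definition digraph :: "'a set \<Rightarrow> ('a \<times> 'a) set \<Rightarrow> bool" where
  "digraph V A \<longleftrightarrow> finite V \<and> A \<subseteq> V \<times> V \<and> (\<forall>x. (x, x) \<notin> A)"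

definition symmetric_digraph :: "'a set \<Rightarrow> ('a \<times> 'a) set \<Rightarrow> bool" where
  "symmetric_digraph V A \<longleftrightarrow> digraph V A \<and> (\<forall>x y. (x, y) \<in> A \<longrightarrow> (y, x) \<in> A)"

definition strong :: "'a set \<Rightarrow> ('a \<times> 'a) set \<Rightarrow> bool" where
  "strong V A \<longleftrightarrow> (\<forall>x\<in>V. \<forall>y\<in>V. (x, y) \<in> A\<^sup>*)"

definition underlying_connected :: "'a set \<Rightarrow> ('a \<times> 'a) set \<Rightarrow> bool" where
  "underlying_connected V A \<longleftrightarrow> (\<forall>x\<in>V. \<forall>y\<in>V. (x, y) \<in> (A \<union> A\<inverse>)\<^sup>*)"

definition is_bridge :: "'a set \<Rightarrow> ('a \<times> 'a) set \<Rightarrow> 'a \<Rightarrow> 'a \<Rightarrow> bool" where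
  "is_bridge V A x y \<longleftrightarrow> (x, y) \<in> A \<and> (y, x) \<in> A \<and>
     \<not> underlying_connected V (A - {(x, y), (y, x)})"

definition has_bridge :: "'a set \<Rightarrow> ('a \<times> 'a) set \<Rightarrow> bool" where
  "has_bridge V A \<longleftrightarrow> (\<exists>x y. is_bridge V A x y)"

definition strong_subgraph_containing ::
  "'a set \<Rightarrow> ('a \<times> 'a) set \<Rightarrow> 'a set \<Rightarrow> 'a set \<Rightarrow> ('a \<times> 'a) set \<Rightarrow> bool" where
  "strong_subgraph_containing V A S V' A' \<longleftrightarrow>
     V' \<subseteq> V \<and> A' \<subseteq> A \<and> A' \<subseteq> V' \<times> V' \<and> S \<subseteq> V' \<and> strong V' A'"

definition lambda_S :: "'a set \<Rightarrow> ('a \<times> 'a) set \<Rightarrow> 'a set \<Rightarrow> nat" where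
  "lambda_S V A S = Sup {m. \<exists>H :: nat \<Rightarrow> 'a set \<times> ('a \<times> 'a) set.
       (\<forall>i<m. strong_subgraph_containing V A S (fst (H i)) (snd (H i))) \<and>
       (\<forall>i<m. \<forall>j<m. i \<noteq> j \<longrightarrow> snd (H i) \<inter> snd (H j) = {})}"

definition lambda_k :: "'a set \<Rightarrow> ('a \<times> 'a) set \<Rightarrow> nat \<Rightarrow> nat" where
  "lambda_k V A k = Min {lambda_S V A S | S. S \<subseteq> V \<and> card S = k}"

end

theory Submission
  imports Defs "HOL-Library.Transitive_Closure_Table"
begin

text \<open>If xyx is a bridge, every strong subgraph containing x and y uses the arc xy:
  otherwise x reaches y while avoiding the 2-cycle, and then x reaches every vertex
  after the 2-cycle is deleted. So a k-set S \<supseteq> {x, y} has \<lambda>_S(D) \<le> 1.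
  Conversely, by Robbins' theorem a bridgeless D has a strong orientation Q, and Q and
  its converse are two arc-disjoint spanning strong subgraphs, so \<lambda>_S(D) \<ge> 2 for all S.
  Robbins' theorem is proved by growing a strongly oriented vertex set W by ears: an arc
  uw leaving W is not a bridge, so w returns to W avoiding uw and wu; orienting
  u \<rightarrow> w followed by a simple path to the first vertex back in W keeps the orientation
  strong and asymmetric.\<close>

lemma rtrancl_exit_arc:
  assumes "(a, b) \<in> R\<^sup>*" "a \<in> W" "b \<notin> W"
  shows "\<exists>u w. (u, w) \<in> R \<and> u \<in> W \<and> w \<notin> W"
  using assms by (induction rule: rtrancl_induct) auto

lemma rtrancl_first_entry:
  assumes "(a, b) \<in> F\<^sup>*" "a \<notin> W" "b \<in> W"
  shows "\<exists>v z. (a, v) \<in> (Restr F (- W))\<^sup>* \<and> (v, z) \<in> F \<and> v \<notin> W \<and> z \<in> W"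
  using assms
proof (induction rule: converse_rtrancl_induct)
  case base
  then show ?case by simp
next
  case (step a c)
  show ?case
  proof (cases "c \<in> W")
    case True
    then show ?thesis using step by blast
  next
    case False
    then have "(a, c) \<in> Restr F (- W)" using step by auto
    then show ?thesis using step False by (meson converse_rtrancl_into_rtrancl)
  qed
qed

lemma rtrancl_reroute:
  assumes "(x, v) \<in> R\<^sup>*" and "\<And>a b. (a, b) \<in> R \<Longrightarrow> (a, b) \<notin> F \<Longrightarrow> (x, b) \<in> F\<^sup>*"
  shows "(x, v) \<in> F\<^sup>*"
  using assms(1)
proof (induction rule: rtrancl_induct)
  case base
  then show ?case by simp
next
  case (step v v')
  then show ?case using assms(2) by (cases "(v, v') \<in> F") auto
qed

fun path_arcs :: "'a \<Rightarrow> 'a list \<Rightarrow> 'a rel" where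
  "path_arcs x [] = {}"
| "path_arcs x (y # ys) = insert (x, y) (path_arcs y ys)"

lemma path_arcs_subset: "rtrancl_path r x xs y \<Longrightarrow> path_arcs x xs \<subseteq> {(p, q). r p q}"
  by (induction rule: rtrancl_path.induct) auto

lemma Field_path_arcs: "Field (path_arcs x xs) \<subseteq> set (x # xs)"
  by (induction xs arbitrary: x) (auto simp: Field_def)

lemma asym_path_arcs: "distinct (x # xs) \<Longrightarrow> asym (path_arcs x xs)"
proof (induction xs arbitrary: x)
  case Nil
  then show ?case by simp
next
  case (Cons y ys)
  have "asym (path_arcs y ys)" "x \<notin> Field (path_arcs y ys)" "x \<noteq> y"
    using Cons Field_path_arcs by fastforce+
  then show ?case
    unfolding asym_on_def by (auto intro: FieldI1 FieldI2)
qed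

lemma path_arcs_reach:
  assumes "rtrancl_path r x xs y" "p \<in> set (x # xs)"
  shows "(x, p) \<in> (path_arcs x xs)\<^sup>* \<and> (p, y) \<in> (path_arcs x xs)\<^sup>*"
  using assms
proof (induction arbitrary: p rule: rtrancl_path.induct)
  case (base x)
  then show ?case by simp
next
  case (step x y ys z)
  have mono: "(path_arcs y ys)\<^sup>* \<subseteq> (path_arcs x (y # ys))\<^sup>*"
    by (simp add: rtrancl_mono subset_insertI)
  have xy: "(x, y) \<in> (path_arcs x (y # ys))\<^sup>*" by auto
  have yz: "(y, z) \<in> (path_arcs x (y # ys))\<^sup>*" using step.IH[of y] mono by auto
  show ?case
  proof (cases "p = x")
    case True
    then show ?thesis using xy yz by (meson rtrancl_trans rtrancl.rtrancl_refl)
  next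
    case False
    then have "(y, p) \<in> (path_arcs x (y # ys))\<^sup>*" "(p, z) \<in> (path_arcs x (y # ys))\<^sup>*"
      using step.IH[of p] step.prems mono by auto
    then show ?thesis using xy by (meson rtrancl_trans)
  qed
qed

lemma rtrancl_imp_asym_path:
  assumes "(a, b) \<in> R\<^sup>*"
  shows "\<exists>P \<subseteq> R. asym P \<and> (\<forall>p \<in> insert a (Field P). (a, p) \<in> P\<^sup>* \<and> (p, b) \<in> P\<^sup>*)"
proof -
  have "(\<lambda>p q. (p, q) \<in> R)\<^sup>*\<^sup>* a b"
    using assms unfolding rtranclp_rtrancl_eq by simp
  then obtain xs where "rtrancl_path (\<lambda>p q. (p, q) \<in> R) a xs b"
    unfolding rtranclp_eq_rtrancl_path by blast
  then obtain xs where path: "rtrancl_path (\<lambda>p q. (p, q) \<in> R) a xs b"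
    and distinct: "distinct (a # xs)"
    by (rule rtrancl_path_distinct)
  show ?thesis
    using path_arcs_subset[OF path] asym_path_arcs[OF distinct] Field_path_arcs[of a xs]
      path_arcs_reach[OF path]
    by (intro exI[of _ "path_arcs a xs"]) auto
qed

lemma bridge_arc_in_subgraph:
  assumes "sym A" "strong V A" "is_bridge V A x y" "x \<in> V"
    and "A' \<subseteq> A" "(x, y) \<in> A'\<^sup>*"
  shows "(x, y) \<in> A'"
proof (rule ccontr)
  assume "(x, y) \<notin> A'"
  define F where "F = A - {(x, y), (y, x)}"
  have "(x, y) \<in> (A - {(x, y)})\<^sup>*"
    using assms(5,6) \<open>(x, y) \<notin> A'\<close> rtrancl_mono[of A' "A - {(x, y)}"] by blast
  then have xy: "(x, y) \<in> F\<^sup>*"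
    by (rule rtrancl_reroute) (auto simp: F_def)
  have "(x, b) \<in> F\<^sup>*" if "(a, b) \<in> A" "(a, b) \<notin> F" for a b
    using that xy by (auto simp: F_def)
  then have from_x: "(x, v) \<in> F\<^sup>*" if "v \<in> V" for v
    using assms(2,4) that unfolding strong_def by (blast intro: rtrancl_reroute)
  have "sym F"
    using assms(1) unfolding F_def by (auto intro!: symI dest: symD)
  then have "sym (F\<^sup>*)" by (rule sym_rtrancl)
  then have "(a, b) \<in> F\<^sup>*" if "a \<in> V" "b \<in> V" for a b
    using from_x[OF that(1)] from_x[OF that(2)] by (blast dest: symD intro: rtrancl_trans)
  then have "underlying_connected V F"
    unfolding underlying_connected_def by (meson in_rtrancl_UnI)
  then show False
    using assms(3) by (simp add: is_bridge_def F_def)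
qed

lemma not_bridge_rtrancl:
  assumes "sym A" "(u, w) \<in> A" "u \<in> V" "w \<in> V" "\<not> is_bridge V A u w"
  shows "(w, u) \<in> (A - {(u, w), (w, u)})\<^sup>*"
proof -
  let ?F = "A - {(u, w), (w, u)}"
  have "underlying_connected V ?F"
    using assms(1,2,5) by (auto simp: is_bridge_def dest: symD)
  moreover have "?F \<union> ?F\<inverse> = ?F"
    using assms(1) by (auto dest: symD)
  ultimately show ?thesis
    using assms(3,4) unfolding underlying_connected_def by metis
qed

lemma asym_add_ear:
  assumes "asym Q" "Q \<subseteq> W \<times> W" "asym P" "P \<subseteq> (- W) \<times> (- W)"
    and "u \<in> W" "w \<notin> W" "v \<notin> W" "z \<in> W" "(v, z) \<noteq> (w, u)"
  shows "asym (Q \<union> P \<union> {(u, w), (v, z)})"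
  using assms unfolding asym_on_def by blast

lemma strong_add_ear:
  assumes "strong W Q" "u \<in> W" "z \<in> W" "\<forall>p \<in> U. (w, p) \<in> P\<^sup>* \<and> (p, v) \<in> P\<^sup>*"
  shows "strong (W \<union> U) (Q \<union> P \<union> {(u, w), (v, z)})"
proof -
  let ?Q' = "Q \<union> P \<union> {(u, w), (v, z)}"
  have mono: "Q\<^sup>* \<subseteq> ?Q'\<^sup>*" "P\<^sup>* \<subseteq> ?Q'\<^sup>*" by (intro rtrancl_mono; blast)+
  have ear: "(u, w) \<in> ?Q'" "(v, z) \<in> ?Q'" by auto
  have "(p, u) \<in> ?Q'\<^sup>* \<and> (u, p) \<in> ?Q'\<^sup>*" if "p \<in> W \<union> U" for p
  proof (cases "p \<in> W")
    case True
    then show ?thesis using assms(1,2) mono by (auto simp: strong_def)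
  next
    case False
    then have "(w, p) \<in> ?Q'\<^sup>*" "(p, v) \<in> ?Q'\<^sup>*" using that assms(4) mono by auto
    moreover have "(z, u) \<in> ?Q'\<^sup>*" using assms(1-3) mono by (auto simp: strong_def)
    ultimately show ?thesis using ear
      by (meson converse_rtrancl_into_rtrancl rtrancl_trans)
  qed
  then show ?thesis unfolding strong_def by (meson rtrancl_trans)
qed

lemma bridgeless_add_ear:
  assumes "sym A" "A \<subseteq> V \<times> V" "strong V A" "\<not> has_bridge V A"
    and "W \<subseteq> V" "W \<noteq> {}" "W \<noteq> V" "Q \<subseteq> A" "Q \<subseteq> W \<times> W" "asym Q" "strong W Q"
  obtains W' Q' where "W \<subset> W'" "W' \<subseteq> V" "Q' \<subseteq> A" "Q' \<subseteq> W' \<times> W'" "asym Q'" "strong W' Q'"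
proof -
  obtain a b where "a \<in> W" "b \<in> V" "b \<notin> W"
    using assms(5-7) by blast
  moreover from this have "(a, b) \<in> A\<^sup>*"
    using assms(3,5) by (auto simp: strong_def)
  ultimately obtain u w where uw: "(u, w) \<in> A" "u \<in> W" "w \<notin> W"
    using rtrancl_exit_arc[of a b A W] by blast
  have "u \<in> V" "w \<in> V"
    using uw assms(2) by auto
  define F where "F = A - {(u, w), (w, u)}"
  have "(w, u) \<in> F\<^sup>*"
    using assms(4) unfolding F_def has_bridge_def
    by (intro not_bridge_rtrancl[OF assms(1) uw(1) \<open>u \<in> V\<close> \<open>w \<in> V\<close>]) blast
  then obtain v z where vz: "(w, v) \<in> (Restr F (- W))\<^sup>*" "(v, z) \<in> F" "v \<notin> W" "z \<in> W"
    using rtrancl_first_entry[of w u F W] uw(2,3) by blast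
  then obtain P where P: "P \<subseteq> Restr F (- W)" "asym P"
    "\<forall>p \<in> insert w (Field P). (w, p) \<in> P\<^sup>* \<and> (p, v) \<in> P\<^sup>*"
    using rtrancl_imp_asym_path[OF vz(1)] by blast
  let ?W' = "W \<union> insert w (Field P)" and ?Q' = "Q \<union> P \<union> {(u, w), (v, z)}"
  show thesis
  proof (rule that[of ?W' ?Q'])
    show "W \<subset> ?W'"
      using uw by auto
    show "?W' \<subseteq> V"
      using P(1) assms(2,5) \<open>w \<in> V\<close> unfolding F_def Field_def by auto
    show "?Q' \<subseteq> A"
      using assms(8) P(1) uw vz unfolding F_def by auto
    have "(w, v) \<in> P\<^sup>*"
      using P(3) by blast
    then have "v \<in> insert w (Field P)"
      by (cases rule: rtranclE) (auto intro: FieldI2)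
    then show "?Q' \<subseteq> ?W' \<times> ?W'"
      using assms(9) uw vz by (auto intro: FieldI1 FieldI2)
    have "(v, z) \<noteq> (w, u)"
      using vz(2) unfolding F_def by auto
    then show "asym ?Q'"
      using P(1,2) assms(9,10) uw vz by (intro asym_add_ear) auto
    show "strong ?W' ?Q'"
      using assms(11) uw(2) vz(4) P(3) by (rule strong_add_ear)
  qed
qed

lemma bridgeless_strong_orientation_extends:
  assumes "sym A" "A \<subseteq> V \<times> V" "finite V" "strong V A" "\<not> has_bridge V A"
    and "W \<subseteq> V" "W \<noteq> {}" "Q \<subseteq> A" "Q \<subseteq> W \<times> W" "asym Q" "strong W Q"
  shows "\<exists>Q \<subseteq> A. asym Q \<and> strong V Q"
  using assms(6-)
proof (induction "card (V - W)" arbitrary: W Q rule: less_induct)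
  case less
  show ?case
  proof (cases "W = V")
    case True
    then show ?thesis using less.prems by blast
  next
    case False
    then obtain W' Q' where W': "W \<subset> W'" "W' \<subseteq> V" "Q' \<subseteq> A" "Q' \<subseteq> W' \<times> W'" "asym Q'" "strong W' Q'"
      using bridgeless_add_ear[OF assms(1,2,4,5) less.prems(1,2) False less.prems(3-6)] by blast
    have "card (V - W') < card (V - W)"
      using W'(1,2) assms(3) by (intro psubset_card_mono) auto
    then show ?thesis
      using less.hyps W' less.prems(2) by blast
  qed
qed

theorem robbins_strong_orientation:
  assumes "sym A" "A \<subseteq> V \<times> V" "finite V" "strong V A" "\<not> has_bridge V A"
  shows "\<exists>Q \<subseteq> A. asym Q \<and> strong V Q"
proof (cases "V = {}")
  case True
  then show ?thesis by (auto simp: strong_def)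
next
  case False
  then obtain a where "a \<in> V" by blast
  then show ?thesis
    using assms by (intro bridgeless_strong_orientation_extends[of A V "{a}" "{}"])
      (auto simp: strong_def)
qed

definition arc_disjoint_strong_subgraphs ::
  "'a set \<Rightarrow> 'a rel \<Rightarrow> 'a set \<Rightarrow> nat \<Rightarrow> (nat \<Rightarrow> 'a set \<times> 'a rel) \<Rightarrow> bool" where
  "arc_disjoint_strong_subgraphs V A S m H \<longleftrightarrow>
     (\<forall>i<m. strong_subgraph_containing V A S (fst (H i)) (snd (H i))) \<and>
     (\<forall>i<m. \<forall>j<m. i \<noteq> j \<longrightarrow> snd (H i) \<inter> snd (H j) = {})"

lemma lambda_S_eq_Sup: "lambda_S V A S = Sup {m. \<exists>H. arc_disjoint_strong_subgraphs V A S m H}"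
  unfolding lambda_S_def arc_disjoint_strong_subgraphs_def ..

lemma arc_disjoint_strong_subgraphs_le_card:
  assumes "finite A" "2 \<le> card S" "arc_disjoint_strong_subgraphs V A S m H"
  shows "m \<le> card A"
proof -
  have subgraph: "\<forall>i<m. strong_subgraph_containing V A S (fst (H i)) (snd (H i))"
    and disjoint: "\<forall>i<m. \<forall>j<m. i \<noteq> j \<longrightarrow> snd (H i) \<inter> snd (H j) = {}"
    using assms(3) unfolding arc_disjoint_strong_subgraphs_def by blast+
  have "finite S"
    using assms(2) by (metis card.infinite not_numeral_le_zero)
  moreover have "\<not> card S \<le> Suc 0"
    using assms(2) by simp
  ultimately obtain x y where "x \<in> S" "y \<in> S" "x \<noteq> y"
    using card_le_Suc0_iff_eq by blast
  have nonempty: "snd (H i) \<noteq> {}" if "i < m" for i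
  proof
    assume "snd (H i) = {}"
    moreover have "(x, y) \<in> (snd (H i))\<^sup>*"
      using subgraph that \<open>x \<in> S\<close> \<open>y \<in> S\<close>
      unfolding strong_subgraph_containing_def strong_def by blast
    ultimately show False
      using \<open>x \<noteq> y\<close> by simp
  qed
  define f where "f i = (SOME e. e \<in> snd (H i))" for i
  have f: "f i \<in> snd (H i)" if "i < m" for i
    using nonempty[OF that] unfolding f_def by (simp add: some_in_eq)
  have "inj_on f {..<m}"
  proof (rule inj_onI)
    fix i j
    assume "i \<in> {..<m}" "j \<in> {..<m}" "f i = f j"
    then show "i = j"
      using f disjoint by (metis disjoint_iff lessThan_iff)
  qed
  moreover have "f ` {..<m} \<subseteq> A"
    using f subgraph unfolding strong_subgraph_containing_def by blast
  ultimately have "card {..<m} \<le> card A"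
    using card_inj_on_le assms(1) by blast
  then show ?thesis
    by simp
qed

lemma le_lambda_S:
  assumes "finite A" "2 \<le> card S" "arc_disjoint_strong_subgraphs V A S m H"
  shows "m \<le> lambda_S V A S"
  unfolding lambda_S_eq_Sup
proof (rule cSup_upper)
  show "m \<in> {m. \<exists>H. arc_disjoint_strong_subgraphs V A S m H}"
    using assms(3) by blast
  show "bdd_above {m. \<exists>H. arc_disjoint_strong_subgraphs V A S m H}"
    by (rule bdd_aboveI[of _ "card A"])
      (use arc_disjoint_strong_subgraphs_le_card[OF assms(1,2)] in blast)
qed

lemma lambda_S_le_1:
  assumes "\<And>V' A'. strong_subgraph_containing V A S V' A' \<Longrightarrow> e \<in> A'"
  shows "lambda_S V A S \<le> 1"
  unfolding lambda_S_eq_Sup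
proof (rule cSup_least)
  show "{m. \<exists>H. arc_disjoint_strong_subgraphs V A S m H} \<noteq> {}"
    unfolding arc_disjoint_strong_subgraphs_def by blast
  fix m
  assume "m \<in> {m. \<exists>H. arc_disjoint_strong_subgraphs V A S m H}"
  then obtain H where subgraph: "\<forall>i<m. strong_subgraph_containing V A S (fst (H i)) (snd (H i))"
    and disjoint: "\<forall>i<m. \<forall>j<m. i \<noteq> j \<longrightarrow> snd (H i) \<inter> snd (H j) = {}"
    unfolding arc_disjoint_strong_subgraphs_def by blast
  have "e \<in> snd (H i)" if "i < m" for i
    using assms subgraph that by blast
  then show "m \<le> 1"
    using disjoint by (metis disjoint_iff not_le zero_less_one zero_neq_one less_trans)
qed

lemma two_le_lambda_S_if_strong_orientation:
  assumes "finite A" "sym A" "A \<subseteq> V \<times> V" "Q \<subseteq> A" "asym Q" "strong V Q"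
    and "S \<subseteq> V" "2 \<le> card S"
  shows "2 \<le> lambda_S V A S"
proof (rule le_lambda_S[OF assms(1,8)])
  let ?H = "\<lambda>i::nat. (V, if i = 0 then Q else Q\<inverse>)"
  have "Q\<inverse> \<subseteq> A"
    using assms(2,4) by (auto dest: symD)
  moreover have "strong V (Q\<inverse>)"
    using assms(6) by (simp add: strong_def rtrancl_converse)
  ultimately show "arc_disjoint_strong_subgraphs V A S 2 ?H"
    using assms(3-7) unfolding arc_disjoint_strong_subgraphs_def strong_subgraph_containing_def
    by (auto simp: less_2_cases_iff asym_on_def)
qed

lemma bridge_lambda_S_le_1:
  assumes "sym A" "strong V A" "is_bridge V A x y" "x \<in> V" "x \<in> S" "y \<in> S"
  shows "lambda_S V A S \<le> 1"
proof (rule lambda_S_le_1)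
  fix V' A'
  assume "strong_subgraph_containing V A S V' A'"
  then have "A' \<subseteq> A" "(x, y) \<in> A'\<^sup>*"
    using assms(5,6) unfolding strong_subgraph_containing_def strong_def by blast+
  then show "(x, y) \<in> A'"
    by (rule bridge_arc_in_subgraph[OF assms(1-4)])
qed

lemma finite_lambda_S_values:
  assumes "finite V"
  shows "finite {lambda_S V A S | S. S \<subseteq> V \<and> card S = k}"
proof (rule finite_subset)
  show "{lambda_S V A S | S. S \<subseteq> V \<and> card S = k} \<subseteq> lambda_S V A ` Pow V"
    by blast
  show "finite (lambda_S V A ` Pow V)"
    using assms by simp
qed

lemma lambda_k_le_lambda_S:
  assumes "finite V" "S \<subseteq> V"
  shows "lambda_k V A (card S) \<le> lambda_S V A S"
  unfolding lambda_k_def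
  by (rule Min_le[OF finite_lambda_S_values[OF assms(1)]]) (use assms(2) in blast)

lemma le_lambda_k:
  assumes "finite V" "k \<le> card V" "\<And>S. S \<subseteq> V \<Longrightarrow> card S = k \<Longrightarrow> c \<le> lambda_S V A S"
  shows "c \<le> lambda_k V A k"
proof -
  obtain S where "S \<subseteq> V" "card S = k"
    using obtain_subset_with_card_n[OF assms(2)] by metis
  then have "{lambda_S V A S | S. S \<subseteq> V \<and> card S = k} \<noteq> {}"
    by blast
  then show ?thesis
    unfolding lambda_k_def using finite_lambda_S_values[OF assms(1)] assms(3)
    by (subst Min_ge_iff) blast+
qed

lemma lambda_k_le_1_if_bridge:
  assumes "sym A" "A \<subseteq> V \<times> V" "finite V" "strong V A" "is_bridge V A x y" "x \<noteq> y"
    and "2 \<le> k" "k \<le> card V"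
  shows "lambda_k V A k \<le> 1"
proof -
  have "x \<in> V" "y \<in> V"
    using assms(2,5) by (auto simp: is_bridge_def)
  then obtain S where S: "{x, y} \<subseteq> S" "S \<subseteq> V" "card S = k"
    using exists_subset_between[of "{x, y}" k V] assms(3,6-8) by auto
  then have "lambda_k V A k \<le> lambda_S V A S"
    using lambda_k_le_lambda_S[OF assms(3) S(2)] by simp
  also have "\<dots> \<le> 1"
    using bridge_lambda_S_le_1[OF assms(1,4,5) \<open>x \<in> V\<close>] S(1) by simp
  finally show ?thesis .
qed

lemma two_le_lambda_k_if_bridgeless:
  assumes "sym A" "A \<subseteq> V \<times> V" "finite V" "strong V A" "\<not> has_bridge V A"
    and "2 \<le> k" "k \<le> card V"
  shows "2 \<le> lambda_k V A k"
proof (rule le_lambda_k[OF assms(3,7)])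
  obtain Q where Q: "Q \<subseteq> A" "asym Q" "strong V Q"
    using robbins_strong_orientation[OF assms(1-5)] by blast
  have "finite A"
    using assms(2,3) by (meson finite_SigmaI finite_subset)
  fix S
  assume "S \<subseteq> V" "card S = k"
  then show "2 \<le> lambda_S V A S"
    using two_le_lambda_S_if_strong_orientation[OF \<open>finite A\<close> assms(1,2) Q] assms(6) by simp
qed

theorem theorem4p4:
  fixes V :: "'a set" and A :: "('a \<times> 'a) set" and n k :: nat
  assumes "symmetric_digraph V A" and "strong V A" and "card V = n"
    and "2 \<le> k" and "k \<le> n"
  shows "lambda_k V A k \<ge> 2 \<longleftrightarrow> \<not> has_bridge V A"
proof -
  have D: "sym A" "A \<subseteq> V \<times> V" "finite V" and loopless: "\<forall>x. (x, x) \<notin> A"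
    using assms(1) by (auto simp: symmetric_digraph_def digraph_def intro: symI)
  show ?thesis
  proof
    assume "2 \<le> lambda_k V A k"
    moreover have "lambda_k V A k \<le> 1" if "is_bridge V A x y" for x y
    proof (rule lambda_k_le_1_if_bridge[OF D assms(2) that _ assms(4)])
      show "x \<noteq> y"
        using that loopless by (auto simp: is_bridge_def)
    qed (use assms(3,5) in simp)
    ultimately show "\<not> has_bridge V A"
      unfolding has_bridge_def by fastforce
  next
    assume "\<not> has_bridge V A"
    then show "2 \<le> lambda_k V A k"
      using two_le_lambda_k_if_bridgeless[OF D assms(2) _ assms(4)] assms(3,5) by simp
  qed
qed

end
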